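(* Let $G$ be a maximal outerplanar graph of order $n\geq 3$. Then $\gamma_{\times 2}(G)\leq \lfloor \frac{2n}{3}\rfloor$. *)

theory Defs
  imports Main
begin

definition simple_graph :: "'a set \<Rightarrow> 'a set set \<Rightarrow> bool" where
  "simple_graph V E \<longleftrightarrow> finite V \<and> (\<forall>e\<in>E. e \<subseteq> V \<and> card e = 2)"

text \<open>Outerplanar: the vertices can be placed on a circle (in the cyclic order given by
  a bijection onto 0..n-1) such that no two edges, drawn as chords, cross.
  Chords {a,b} and {c,d} cross iff their endpoints interleave.\<close>
definition outerplanar :: "'a set \<Rightarrow> 'a set set \<Rightarrow> bool" where
  "outerplanar V E \<longleftrightarrow>
     (\<exists>f. bij_betw f V {0..<card V} \<and>
          (\<forall>a b c d. {a, b} \<in> E \<longrightarrow> {c, d} \<in> E \<longrightarrow>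
               \<not> (f a < f c \<and> f c < f b \<and> f b < f d)))"

definition maximal_outerplanar :: "'a set \<Rightarrow> 'a set set \<Rightarrow> bool" where
  "maximal_outerplanar V E \<longleftrightarrow>
     simple_graph V E \<and> outerplanar V E \<and>
     (\<forall>u\<in>V. \<forall>v\<in>V. u \<noteq> v \<longrightarrow> {u, v} \<notin> E \<longrightarrow> \<not> outerplanar V (insert {u, v} E))"

definition closed_nbhd :: "'a set set \<Rightarrow> 'a \<Rightarrow> 'a set" where
  "closed_nbhd E v = insert v {u. {u, v} \<in> E}"

definition double_dominating :: "'a set \<Rightarrow> 'a set set \<Rightarrow> 'a set \<Rightarrow> bool" where
  "double_dominating V E D \<longleftrightarrow> D \<subseteq> V \<and> (\<forall>v\<in>V. card (closed_nbhd E v \<inter> D) \<ge> 2)"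

definition double_domination_number :: "'a set \<Rightarrow> 'a set set \<Rightarrow> nat" where
  "double_domination_number V E = Min {card D | D. double_dominating V E D}"

end

theory Submission
  imports Defs "HOL-Number_Theory.Cong"
begin

text \<open>Number the vertices along the circle. Maximality forces consecutive vertices to be
  adjacent, so the boundary is a Hamiltonian cycle, and every chord spanning at least two
  boundary edges encloses an ear, a chord \<open>{e, e + 2}\<close>. On a cycle of length \<open>m\<close> with
  \<open>m mod 3 \<noteq> 2\<close>, the positions \<open>j\<close> with \<open>j mod 3 \<noteq> 1\<close> form a double dominating set of
  size \<open>\<lceil>2m/3\<rceil>\<close>. If \<open>3\<close> divides \<open>n\<close> we use the boundary cycle itself; otherwise we cut off
  the tip \<open>e + 1\<close> of an ear, which leaves a cycle of length \<open>n - 1\<close> closed by the ear chord.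
  Its double dominating set contains both neighbours of the tip, and
  \<open>\<lceil>2(n - 1)/3\<rceil> = \<lfloor>2n/3\<rfloor>\<close>.\<close>

section \<open>Non-crossing circular drawings\<close>

definition noncrossing :: "('a \<Rightarrow> nat) \<Rightarrow> 'a set set \<Rightarrow> bool" where
  "noncrossing f E \<longleftrightarrow>
     (\<forall>a b c d. {a, b} \<in> E \<longrightarrow> {c, d} \<in> E \<longrightarrow> \<not> (f a < f c \<and> f c < f b \<and> f b < f d))"

lemma outerplanar_iff_noncrossing:
  "outerplanar V E \<longleftrightarrow> (\<exists>f. bij_betw f V {..<card V} \<and> noncrossing f E)"
  by (simp add: outerplanar_def noncrossing_def atLeast0LessThan)

lemma noncrossing_insert:
  assumes "noncrossing f E" and "f u < f v"
    and uncrossed: "\<And>c d. {c, d} \<in> E \<Longrightarrow> f u < f c \<Longrightarrow> f c < f v \<Longrightarrow> f u \<le> f d \<and> f d \<le> f v"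
  shows "noncrossing f (insert {u, v} E)"
  unfolding noncrossing_def
proof (intro allI impI notI)
  fix a b c d
  assume ab: "{a, b} \<in> insert {u, v} E" and cd: "{c, d} \<in> insert {u, v} E"
    and order: "f a < f c \<and> f c < f b \<and> f b < f d"
  consider "{a, b} \<in> E" "{c, d} \<in> E" | "{a, b} = {u, v}" "{c, d} \<in> E"
    | "{a, b} \<in> E" "{c, d} = {u, v}" | "{a, b} = {u, v}" "{c, d} = {u, v}"
    using ab cd by blast
  then show False
  proof cases
    case 1
    with assms(1) order show False by (auto simp: noncrossing_def)
  next
    case 2
    then have "f a = f u" "f b = f v" using order assms(2) by (auto simp: doubleton_eq_iff)
    then show False using uncrossed[OF 2(2)] order by auto
  next
    case 3
    then have "f c = f u" "f d = f v" using order assms(2) by (auto simp: doubleton_eq_iff)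
    moreover have "{b, a} \<in> E" using 3(1) by (simp add: insert_commute)
    ultimately show False using uncrossed[of b a] order by auto
  next
    case 4
    then show False using order by (auto simp: doubleton_eq_iff)
  qed
qed

section \<open>Triangulated polygons\<close>

locale polygon_triangulation =
  fixes n :: nat and adj :: "nat \<Rightarrow> nat \<Rightarrow> bool"
  assumes adj_sym: "adj i j \<Longrightarrow> adj j i"
    and adj_noncrossing: "\<lbrakk>i < j; j < k; k < l; l < n; adj i k; adj j l\<rbrakk> \<Longrightarrow> False"
    and adj_maximal:
      "\<lbrakk>i < j; j < n; \<not> adj i j\<rbrakk> \<Longrightarrow> \<exists>c d. i < c \<and> c < j \<and> (d < i \<or> j < d \<and> d < n) \<and> adj c d"
begin

lemma adj_Suc: "Suc i < n \<Longrightarrow> adj i (Suc i)"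
  using adj_maximal[of i "Suc i"] by force

lemma adj_first_last: "2 \<le> n \<Longrightarrow> adj 0 (n - 1)"
  using adj_maximal[of 0 "n - 1"] by force

lemma adj_Suc_mod:
  assumes "2 \<le> n" and "i < n"
  shows "adj i (Suc i mod n)"
proof (cases "Suc i < n")
  case False
  with assms(2) have "Suc i = n" by simp
  then have "i = n - 1" and "Suc i mod n = 0" by auto
  with adj_sym[OF adj_first_last[OF assms(1)]] show ?thesis by simp
qed (simp add: adj_Suc)

lemma adj_within_chord:
  assumes "adj a b" and "b < n" and "a < c" and "c < b" and "adj c d" and "d < n"
  shows "a \<le> d \<and> d \<le> b"
proof (rule ccontr)
  assume "\<not> (a \<le> d \<and> d \<le> b)"
  then consider "d < a" | "b < d" by linarith
  then show False
  proof cases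
    case 1
    with assms show False by (intro adj_noncrossing[of d a c b]) (auto intro: adj_sym)
  next
    case 2
    with assms show False by (intro adj_noncrossing[of a c b d]) auto
  qed
qed

lemma ear_below_chord:
  assumes "adj a b" and "a + 2 \<le> b" and "b < n"
  shows "\<exists>e. a \<le> e \<and> e + 2 \<le> b \<and> adj e (e + 2)"
  using assms
proof (induction "b - a" arbitrary: a b rule: less_induct)
  case less
  consider "b = a + 2" | "b \<noteq> a + 2" "adj (Suc a) b" | "b \<noteq> a + 2" "\<not> adj (Suc a) b"
    by blast
  then show ?case
  proof cases
    case 1
    with less.prems(1) show ?thesis by blast
  next
    case 2
    with less.prems have "Suc a + 2 \<le> b" and "b - Suc a < b - a" by auto
    then obtain e where "Suc a \<le> e" "e + 2 \<le> b" "adj e (e + 2)"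
      using less.hyps 2(2) less.prems(3) by blast
    then show ?thesis by (intro exI[of _ e]) simp
  next
    case 3
    then obtain c d where c: "Suc a < c" "c < b" and d: "d < Suc a \<or> b < d \<and> d < n" and "adj c d"
      using adj_maximal[of "Suc a" b] less.prems by auto
    with adj_within_chord[OF less.prems(1,3) _ c(2) \<open>adj c d\<close>] less.prems(3) have "d = a"
      by auto
    with \<open>adj c d\<close> have "adj a c" by (simp add: adj_sym)
    moreover have "a + 2 \<le> c" and "c - a < b - a" using c by auto
    ultimately obtain e where "a \<le> e" "e + 2 \<le> c" "adj e (e + 2)"
      using less.hyps less.prems(3) c by (meson less_trans)
    then show ?thesis using c by (intro exI[of _ e]) simp
  qed
qed

lemma ear_exists:
  assumes "3 \<le> n"
  shows "\<exists>e. e + 2 < n \<and> adj e (e + 2)"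
proof -
  have "\<exists>e. 0 \<le> e \<and> e + 2 \<le> n - 1 \<and> adj e (e + 2)"
    using assms by (intro ear_below_chord adj_first_last) auto
  then obtain e where "e + 2 \<le> n - 1" and "adj e (e + 2)" by blast
  then show ?thesis by (intro exI[of _ e]) auto
qed

end

lemma maximal_outerplanar_nonedge_crossed:
  assumes "maximal_outerplanar V E" and f: "bij_betw f V {..<card V}" and nc: "noncrossing f E"
    and "u \<in> V" "v \<in> V" "f u < f v" "{u, v} \<notin> E"
  obtains c d where "{c, d} \<in> E" "f u < f c" "f c < f v" "f d < f u \<or> f v < f d"
proof (rule ccontr)
  assume "\<not> thesis"
  then have "noncrossing f (insert {u, v} E)"
    using that by (intro noncrossing_insert[OF nc \<open>f u < f v\<close>]) (meson leI)
  with f have "outerplanar V (insert {u, v} E)"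
    by (auto simp: outerplanar_iff_noncrossing)
  moreover have "u \<noteq> v"
    using \<open>f u < f v\<close> by auto
  ultimately show False
    using assms(1,4,5,7) by (auto simp: maximal_outerplanar_def)
qed

lemma maximal_outerplanar_polygon_triangulation:
  assumes "maximal_outerplanar V E"
  obtains h where "bij_betw h {..<card V} V"
    and "polygon_triangulation (card V) (\<lambda>i j. {h i, h j} \<in> E)"
proof -
  define n where "n = card V"
  obtain f where f: "bij_betw f V {..<n}" and nc: "noncrossing f E"
    using assms by (auto simp: maximal_outerplanar_def outerplanar_iff_noncrossing n_def)
  define h where "h = the_inv_into V f"
  have h: "bij_betw h {..<n} V"
    using f by (simp add: h_def bij_betw_the_inv_into)
  have fh: "f (h i) = i" if "i < n" for i
    using f that by (simp add: h_def f_the_inv_into_f_bij_betw)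
  have hV: "h i \<in> V" if "i < n" for i
    using h that by (auto dest: bij_betw_apply)
  have hf: "h (f v) = v" and fV: "f v < n" if "v \<in> V" for v
    using f that by (auto simp: h_def bij_betw_def the_inv_into_f_f)
  have EV: "c \<in> V" "d \<in> V" if "{c, d} \<in> E" for c d
    using assms that by (auto simp: maximal_outerplanar_def simple_graph_def)
  have "polygon_triangulation n (\<lambda>i j. {h i, h j} \<in> E)"
  proof
    fix i j
    show "{h i, h j} \<in> E \<Longrightarrow> {h j, h i} \<in> E" by (simp add: insert_commute)
  next
    fix i j k l
    assume "i < j" "j < k" "k < l" "l < n" "{h i, h k} \<in> E" "{h j, h l} \<in> E"
    then show False
      using nc[unfolded noncrossing_def, rule_format, of "h i" "h k" "h j" "h l"]
        fh[of i] fh[of j] fh[of k] fh[of l] by simp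
  next
    fix i j
    assume ij: "i < j" "j < n" "{h i, h j} \<notin> E"
    then obtain c d where cd: "{c, d} \<in> E" "i < f c" "f c < j" "f d < i \<or> j < f d"
      using maximal_outerplanar_nonedge_crossed[OF assms, of f "h i" "h j"] f nc hV fh
      by (auto simp: n_def)
    then show "\<exists>c d. i < c \<and> c < j \<and> (d < i \<or> j < d \<and> d < n) \<and> {h c, h d} \<in> E"
      using hf[OF EV(1)[OF cd(1)]] hf[OF EV(2)[OF cd(1)]] fV[OF EV(2)[OF cd(1)]]
      by (intro exI[of _ "f c"] exI[of _ "f d"]) auto
  qed
  with h that show ?thesis by (simp add: n_def)
qed

section \<open>Cycles\<close>

definition graph_cycle :: "'a set set \<Rightarrow> nat \<Rightarrow> (nat \<Rightarrow> 'a) \<Rightarrow> bool" where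
  "graph_cycle E m \<sigma> \<longleftrightarrow> inj_on \<sigma> {..<m} \<and> (\<forall>j<m. {\<sigma> j, \<sigma> (Suc j mod m)} \<in> E)"

lemma graph_cycle_edge: "graph_cycle E m \<sigma> \<Longrightarrow> j < m \<Longrightarrow> {\<sigma> j, \<sigma> (Suc j mod m)} \<in> E"
  by (simp add: graph_cycle_def)

definition cyclic_closed_nbhd :: "nat \<Rightarrow> nat \<Rightarrow> nat set" where
  "cyclic_closed_nbhd m j = {j, if Suc j = m then 0 else Suc j, if j = 0 then m - 1 else j - 1}"

lemma bij_betw_rotate: "bij_betw (\<lambda>i. (i + r) mod m) {..<(m::nat)} {..<m}"
proof -
  have "inj_on (\<lambda>i. (i + r) mod m) {..<m}"
    by (rule inj_onI) (simp add: cong_add_rcancel_nat[unfolded cong_def])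
  moreover have "(\<lambda>i. (i + r) mod m) ` {..<m} \<subseteq> {..<m}"
    by auto
  ultimately show ?thesis
    by (simp add: bij_betw_def endo_inj_surj)
qed

lemma graph_cycle_rotate:
  assumes "graph_cycle E m \<sigma>"
  shows "graph_cycle E m (\<lambda>i. \<sigma> ((i + r) mod m))"
    and "(\<lambda>i. \<sigma> ((i + r) mod m)) ` {..<m} = \<sigma> ` {..<m}"
proof -
  have rot: "bij_betw (\<lambda>i. (i + r) mod m) {..<m} {..<m}"
    by (rule bij_betw_rotate)
  have "(\<lambda>i. \<sigma> ((i + r) mod m)) ` {..<m} = \<sigma> ` ((\<lambda>i. (i + r) mod m) ` {..<m})"
    by (simp add: image_image)
  also have "\<dots> = \<sigma> ` {..<m}"
    using rot by (simp add: bij_betw_def)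
  finally show "(\<lambda>i. \<sigma> ((i + r) mod m)) ` {..<m} = \<sigma> ` {..<m}" .
  have "inj_on (\<lambda>i. \<sigma> ((i + r) mod m)) {..<m}"
    using rot assms by (auto simp: graph_cycle_def bij_betw_def intro: comp_inj_on[unfolded comp_def])
  moreover have "{\<sigma> ((j + r) mod m), \<sigma> ((Suc j mod m + r) mod m)} \<in> E" if "j < m" for j
  proof -
    have "(Suc j mod m + r) mod m = Suc ((j + r) mod m) mod m"
      by (simp add: mod_add_left_eq mod_Suc_eq)
    then show ?thesis
      using assms that by (simp add: graph_cycle_def)
  qed
  ultimately show "graph_cycle E m (\<lambda>i. \<sigma> ((i + r) mod m))"
    by (simp add: graph_cycle_def)
qed

lemma maximal_outerplanar_ear_cycle:
  assumes "maximal_outerplanar V E" and "3 \<le> card V"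
  obtains \<sigma> where "graph_cycle E (card V) \<sigma>" and "\<sigma> ` {..<card V} = V"
    and "{\<sigma> (card V - 1), \<sigma> 1} \<in> E"
proof -
  define n where "n = card V"
  obtain h where h: "bij_betw h {..<n} V" and tri: "polygon_triangulation n (\<lambda>i j. {h i, h j} \<in> E)"
    using maximal_outerplanar_polygon_triangulation[OF assms(1)] n_def by blast
  have cycle: "graph_cycle E n h"
    using h polygon_triangulation.adj_Suc_mod[OF tri] assms(2)
    by (simp add: graph_cycle_def bij_betw_def n_def)
  obtain e where e: "e + 2 < n" and ear: "{h e, h (e + 2)} \<in> E"
    using polygon_triangulation.ear_exists[OF tri] assms(2) n_def by blast
  \<comment> \<open>rotate the numbering so that the tip \<open>e + 1\<close> of the ear becomes position \<open>0\<close>\<close>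
  define \<sigma> where "\<sigma> = (\<lambda>i. h ((i + Suc e) mod n))"
  have "\<sigma> (n - 1) = h e" and "\<sigma> 1 = h (e + 2)"
    using e by (simp_all add: \<sigma>_def)
  moreover have "graph_cycle E n \<sigma>"
    unfolding \<sigma>_def by (rule graph_cycle_rotate(1)[OF cycle])
  moreover have "\<sigma> ` {..<n} = V"
    unfolding \<sigma>_def graph_cycle_rotate(2)[OF cycle] using h by (simp add: bij_betw_def)
  ultimately show ?thesis
    using that ear n_def by metis
qed

lemma graph_cycle_cut_ear:
  assumes cycle: "graph_cycle E m \<sigma>" and ear: "{\<sigma> (m - 1), \<sigma> 1} \<in> E" and "3 \<le> m"
  shows "graph_cycle E (m - 1) (\<lambda>j. \<sigma> (Suc j))"
proof -
  have "inj_on (\<lambda>j. \<sigma> (Suc j)) {..<m - 1}"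
  proof (rule inj_onI)
    fix x y
    assume "x \<in> {..<m - 1}" "y \<in> {..<m - 1}" "\<sigma> (Suc x) = \<sigma> (Suc y)"
    then show "x = y"
      using cycle inj_onD[of \<sigma> "{..<m}" "Suc x" "Suc y"] by (simp add: graph_cycle_def)
  qed
  moreover have "{\<sigma> (Suc j), \<sigma> (Suc (Suc j mod (m - 1)))} \<in> E" if "j < m - 1" for j
  proof (cases "Suc j < m - 1")
    case True
    then have "Suc j < m" and "Suc (Suc j) mod m = Suc (Suc j)" by auto
    with graph_cycle_edge[OF cycle, of "Suc j"] True show ?thesis
      by simp
  next
    case False
    with that have "Suc j = m - 1" by simp
    with ear show ?thesis by simp
  qed
  ultimately show ?thesis
    by (simp add: graph_cycle_def)
qed

lemma graph_cycle_closed_nbhd: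
  assumes "graph_cycle E m \<sigma>" and "j < m"
  shows "\<sigma> ` cyclic_closed_nbhd m j \<subseteq> closed_nbhd E (\<sigma> j)"
proof -
  define p where "p = (if j = 0 then m - 1 else j - 1)"
  have "p < m" and "Suc p mod m = j"
    using assms(2) by (auto simp: p_def)
  then have "{\<sigma> p, \<sigma> j} \<in> E"
    using graph_cycle_edge[OF assms(1), of p] by simp
  moreover have "{\<sigma> j, \<sigma> (if Suc j = m then 0 else Suc j)} \<in> E"
    using graph_cycle_edge[OF assms] assms(2) by (cases "Suc j = m") auto
  ultimately show ?thesis
    by (auto simp: closed_nbhd_def cyclic_closed_nbhd_def p_def insert_commute)
qed

section \<open>Double domination\<close>

lemma two_le_card_closed_nbhd_inter:
  assumes "finite D" and "{a, b} \<subseteq> closed_nbhd E v \<inter> D" and "a \<noteq> b"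
  shows "2 \<le> card (closed_nbhd E v \<inter> D)"
proof -
  have "card {a, b} \<le> card (closed_nbhd E v \<inter> D)"
    using assms by (intro card_mono) auto
  with assms(3) show ?thesis by simp
qed

lemma double_dominating_insert:
  assumes "double_dominating W E D" and "finite W"
    and "a \<in> D" "b \<in> D" "a \<noteq> b" and "{a, v} \<in> E" "{b, v} \<in> E"
  shows "double_dominating (insert v W) E D"
proof -
  have "finite D"
    using assms(1,2) by (auto simp: double_dominating_def intro: finite_subset)
  then have "2 \<le> card (closed_nbhd E v \<inter> D)"
    using assms(3-7) by (intro two_le_card_closed_nbhd_inter[of D a b]) (auto simp: closed_nbhd_def)
  with assms(1) show ?thesis
    by (auto simp: double_dominating_def)
qed

lemma double_domination_number_le:
  assumes "finite V" and "double_dominating V E D"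
  shows "double_domination_number V E \<le> card D"
proof -
  have "{card D | D. double_dominating V E D} \<subseteq> card ` Pow V"
    by (auto simp: double_dominating_def)
  then have "finite {card D | D. double_dominating V E D}"
    by (rule finite_subset) (simp add: assms(1))
  with assms(2) show ?thesis
    unfolding double_domination_number_def by (intro Min_le) blast+
qed

lemma card_lessThan_mod_3_ne_1: "card {j. j < m \<and> j mod 3 \<noteq> (1::nat)} = m - Suc m div 3"
proof (induction m)
  case (Suc m)
  have "{j. j < Suc m \<and> j mod 3 \<noteq> 1} =
      (if m mod 3 = 1 then {j. j < m \<and> j mod 3 \<noteq> 1} else insert m {j. j < m \<and> j mod 3 \<noteq> 1})"
    by (auto simp: less_Suc_eq)
  then have "card {j. j < Suc m \<and> j mod 3 \<noteq> 1} =
      card {j. j < m \<and> j mod 3 \<noteq> 1} + (if m mod 3 = 1 then 0 else 1)"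
    by simp
  also have "\<dots> = Suc m - Suc (Suc m) div 3"
    using Suc.IH by (auto simp: div_Suc mod_Suc)
  finally show ?case .
qed simp

lemma pred_mod_3_ne_1:
  fixes m :: nat
  assumes "2 \<le> m" and "m mod 3 \<noteq> 2"
  shows "(m - 1) mod 3 \<noteq> 1"
proof -
  have "m mod 3 = 0 \<or> m mod 3 = 1"
    using assms(2) mod_less_divisor[of 3 m] by linarith
  with assms(1) show ?thesis
    by (cases m) (auto simp: mod_Suc split: if_splits)
qed

lemma cyclic_closed_nbhd_two_mod_3_ne_1:
  fixes m j :: nat
  assumes "2 \<le> m" and "m mod 3 \<noteq> 2" and "j < m"
  obtains a b where "a \<in> cyclic_closed_nbhd m j" "b \<in> cyclic_closed_nbhd m j" "a \<noteq> b"
    and "a mod 3 \<noteq> 1" "b mod 3 \<noteq> 1"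
proof -
  define succ where "succ = (if Suc j = m then 0 else Suc j)"
  define pred where "pred = (if j = 0 then m - 1 else j - 1)"
  have N: "cyclic_closed_nbhd m j = {j, succ, pred}"
    by (simp add: cyclic_closed_nbhd_def succ_def pred_def)
  have last: "(m - 1) mod 3 \<noteq> 1"
    using assms(1,2) by (rule pred_mod_3_ne_1)
  consider "j mod 3 = 0" | "j mod 3 = 1" | "j mod 3 = 2"
    using mod_less_divisor[of 3 j] by linarith
  then show thesis
  proof cases
    case 1
    then have "pred mod 3 \<noteq> 1"
      using last by (cases j) (auto simp: pred_def mod_Suc split: if_splits)
    moreover have "j \<noteq> pred"
      using assms(1) by (auto simp: pred_def)
    ultimately show thesis
      using that[of j pred] 1 by (simp add: N)
  next
    case 2
    then have "succ = Suc j"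
      using assms(2) by (auto simp: succ_def mod_Suc)
    moreover from 2 have "pred = j - 1" and "(j - 1) mod 3 = 0" and "Suc j mod 3 = 2"
      by (cases j; auto simp: pred_def mod_Suc split: if_splits)+
    ultimately show thesis
      using that[of succ pred] by (simp add: N)
  next
    case 3
    then have "succ mod 3 = 0" and "j \<noteq> succ"
      by (auto simp: succ_def mod_Suc)
    with 3 show thesis
      using that[of j succ] by (simp add: N)
  qed
qed

lemma cycle_double_dominating:
  assumes cycle: "graph_cycle E m \<sigma>" and "2 \<le> m" and "m mod 3 \<noteq> 2"
  defines "D \<equiv> \<sigma> ` {j. j < m \<and> j mod 3 \<noteq> 1}"
  shows "double_dominating (\<sigma> ` {..<m}) E D" and "card D = m - Suc m div 3"
    and "\<sigma> 0 \<in> D" and "\<sigma> (m - 1) \<in> D"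
proof -
  have inj: "inj_on \<sigma> {..<m}"
    using cycle by (simp add: graph_cycle_def)
  then have "card D = card {j. j < m \<and> j mod 3 \<noteq> 1}"
    unfolding D_def by (intro card_image) (auto intro: inj_on_subset)
  also have "\<dots> = m - Suc m div 3"
    by (rule card_lessThan_mod_3_ne_1)
  finally show "card D = m - Suc m div 3" .
  show "\<sigma> 0 \<in> D" and "\<sigma> (m - 1) \<in> D"
    using assms(2) pred_mod_3_ne_1[OF assms(2,3)] by (auto simp: D_def)
  have "2 \<le> card (closed_nbhd E (\<sigma> j) \<inter> D)" if j: "j < m" for j
  proof -
    obtain a b where ab: "a \<in> cyclic_closed_nbhd m j" "b \<in> cyclic_closed_nbhd m j"
      "a \<noteq> b" "a mod 3 \<noteq> 1" "b mod 3 \<noteq> 1"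
      using cyclic_closed_nbhd_two_mod_3_ne_1[OF assms(2,3) j] by blast
    have "a < m" "b < m"
      using ab(1,2) j by (auto simp: cyclic_closed_nbhd_def split: if_splits)
    then have "{\<sigma> a, \<sigma> b} \<subseteq> closed_nbhd E (\<sigma> j) \<inter> D" and "\<sigma> a \<noteq> \<sigma> b"
      using graph_cycle_closed_nbhd[OF cycle j] ab inj unfolding D_def
      by (auto simp: inj_on_eq_iff)
    then show ?thesis
      by (intro two_le_card_closed_nbhd_inter) (auto simp: D_def)
  qed
  then show "double_dominating (\<sigma> ` {..<m}) E D"
    by (auto simp: double_dominating_def D_def)
qed

lemma cut_ear_double_dominating:
  assumes cycle: "graph_cycle E n \<sigma>" and ear: "{\<sigma> (n - 1), \<sigma> 1} \<in> E"
    and "3 \<le> n" and "n mod 3 \<noteq> 0"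
  obtains D where "double_dominating (\<sigma> ` {..<n}) E D" and "card D = n - 1 - n div 3"
proof -
  define \<tau> where "\<tau> = (\<lambda>j. \<sigma> (Suc j))"
  have cut: "graph_cycle E (n - 1) \<tau>"
    unfolding \<tau>_def using cycle ear \<open>3 \<le> n\<close> by (rule graph_cycle_cut_ear)
  define D where "D = \<tau> ` {j. j < n - 1 \<and> j mod 3 \<noteq> 1}"
  have "2 \<le> n - 1" and "(n - 1) mod 3 \<noteq> 2"
    using assms(3,4) by (cases n; auto simp: mod_Suc)+
  note cut_dom = cycle_double_dominating[OF cut this, folded D_def]
  have "\<sigma> 1 \<in> D" and "\<sigma> (n - 1) \<in> D"
    using cut_dom(3,4) \<open>3 \<le> n\<close> by (simp_all add: \<tau>_def Suc_diff_Suc)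
  moreover have "\<sigma> 1 \<noteq> \<sigma> (n - 1)"
    using cycle \<open>3 \<le> n\<close> inj_on_eq_iff[of \<sigma> "{..<n}" 1 "n - 1"] by (simp add: graph_cycle_def)
  moreover have "{\<sigma> 1, \<sigma> 0} \<in> E" and "{\<sigma> (n - 1), \<sigma> 0} \<in> E"
    using graph_cycle_edge[OF cycle, of 0] graph_cycle_edge[OF cycle, of "n - 1"] \<open>3 \<le> n\<close>
    by (simp_all add: insert_commute)
  ultimately have "double_dominating (insert (\<sigma> 0) (\<tau> ` {..<n - 1})) E D"
    using cut_dom(1) by (intro double_dominating_insert[where a = "\<sigma> 1" and b = "\<sigma> (n - 1)"]) auto
  moreover have "insert (\<sigma> 0) (\<tau> ` {..<n - 1}) = \<sigma> ` {..<n}"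
    using \<open>3 \<le> n\<close> lessThan_Suc_eq_insert_0[of "n - 1"] by (simp add: \<tau>_def image_image)
  moreover have "card D = n - 1 - n div 3"
    using cut_dom(2) \<open>3 \<le> n\<close> by simp
  ultimately show ?thesis
    using that by simp
qed

lemma ear_cycle_double_dominating:
  assumes cycle: "graph_cycle E n \<sigma>" and ear: "{\<sigma> (n - 1), \<sigma> 1} \<in> E" and "3 \<le> n"
  obtains D where "double_dominating (\<sigma> ` {..<n}) E D" and "card D \<le> 2 * n div 3"
proof (cases "n mod 3 = 0")
  case True
  with \<open>3 \<le> n\<close> have "2 \<le> n" and "n mod 3 \<noteq> 2" and "n - Suc n div 3 \<le> 2 * n div 3"
    by simp_all presburger
  with cycle_double_dominating(1,2)[OF cycle] that show ?thesis
    by simp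
next
  case False
  obtain D where "double_dominating (\<sigma> ` {..<n}) E D" and "card D = n - 1 - n div 3"
    using cut_ear_double_dominating[OF cycle ear \<open>3 \<le> n\<close> False] by blast
  moreover from False \<open>3 \<le> n\<close> have "n - 1 - n div 3 \<le> 2 * n div 3"
    by presburger
  ultimately show ?thesis
    using that by simp
qed

theorem corollary3p3:
  fixes V :: "'a set" and E :: "'a set set"
  assumes "maximal_outerplanar V E" and "card V \<ge> 3"
  shows "double_domination_number V E \<le> (2 * card V) div 3"
proof -
  have "finite V"
    using assms(1) by (simp add: maximal_outerplanar_def simple_graph_def)
  obtain \<sigma> where cycle: "graph_cycle E (card V) \<sigma>" and V: "\<sigma> ` {..<card V} = V"
    and ear: "{\<sigma> (card V - 1), \<sigma> 1} \<in> E"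
    using maximal_outerplanar_ear_cycle[OF assms] by blast
  obtain D where "double_dominating V E D" and "card D \<le> 2 * card V div 3"
    using ear_cycle_double_dominating[OF cycle ear assms(2)] unfolding V by blast
  with double_domination_number_le[OF \<open>finite V\<close>] show ?thesis
    by (meson le_trans)
qed

end
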